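(* Assume $\mathcal{D}_{\mathcal{X}}$ is absolutely continuous with respect to $\mathcal{Q}$ and $C_{\mathcal{X}}\ge\|d\mathcal{D}_{\mathcal{X}}/d\mathcal{Q}\|_\infty$. Then for every measurable $H:\mathcal{X}\to\mathbb{R}$ and every measurable $h^*:\mathcal{X}\to\{\pm1\}$, $$\Phi'(H,\mathrm{sign}(H))-\Phi'(H,h^* )\ge\mathrm{corr}_{\mathcal{D}}(h^* )-\mathrm{corr}_{\mathcal{D}}(\mathrm{sign}(H)).$$
   Context: $\mathcal{D}$ is a distribution on $\mathcal{X}\times\{\pm1\}$ with feature marginal $\mathcal{D}_{\mathcal{X}}$, and $\mathcal{Q}$ is another distribution on $\mathcal{X}$. $\mathrm{corr}_{\mathcal{D}}(h)=\mathbb{E}_{(x,y)\sim\mathcal{D}}[yh(x)]$. $\mathrm{sign}(z)=1$ if $z\ge0$, else $-1$. $\psi$ is the Huber loss ($\psi(z)=|z|-\tfrac12$ for $|z|>1$, $\tfrac12z^2$ for $|z|\le1$), $\psi'(z)=\mathrm{sign}(z)\min\{1,|z|\}$. For measurable $H:\mathcal{X}\to\mathbb{R}$ and bounded measurable $h$, $\Phi'(H,h)=C_{\mathcal{X}}\,\mathbb{E}_{x\sim\mathcal{Q}}[\psi'(H(x))h(x)]-\mathbb{E}_{(x,y)\sim\mathcal{D}}[yh(x)]$. *)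

theory Defs
  imports "HOL-Probability.Probability"
begin

definition sign_pm :: "real \<Rightarrow> real" where
  "sign_pm z = (if z \<ge> 0 then 1 else -1)"

text \<open>derivative of the Huber loss\<close>
definition huber_deriv :: "real \<Rightarrow> real" where
  "huber_deriv z = sign_pm z * min 1 \<bar>z\<bar>"

definition corr :: "('a \<times> real) measure \<Rightarrow> ('a \<Rightarrow> real) \<Rightarrow> real" where
  "corr D h = (\<integral>p. snd p * h (fst p) \<partial>D)"

definition Phi' :: "real \<Rightarrow> 'a measure \<Rightarrow> ('a \<times> real) measure \<Rightarrow> ('a \<Rightarrow> real) \<Rightarrow> ('a \<Rightarrow> real) \<Rightarrow> real" where
  "Phi' C Q D H h = C * (\<integral>x. huber_deriv (H x) * h x \<partial>Q) - (\<integral>p. snd p * h (fst p) \<partial>D)"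

end

theory Submission
  imports Defs
begin

text \<open>
  Both sides contain the same correlation terms, so the inequality reduces to
  \<open>C \<cdot> \<integral>\<psi>'(H) h\<^sup>* dQ \<le> C \<cdot> \<integral>\<psi>'(H) sign(H) dQ\<close>.
  This holds pointwise, since \<open>\<psi>'(z) sign(z) = |\<psi>'(z)|\<close> dominates \<open>\<psi>'(z) h\<close> for
  every \<open>|h| \<le> 1\<close>, and \<open>C > 0\<close> because it bounds the density of a probability
  measure.
\<close>

lemma abs_huber_deriv_le_1: "\<bar>huber_deriv z\<bar> \<le> 1"
  by (simp add: huber_deriv_def sign_pm_def abs_mult)

lemma huber_deriv_mult_le_sign:
  assumes "\<bar>h\<bar> \<le> 1"
  shows "huber_deriv z * h \<le> huber_deriv z * sign_pm z"
proof -
  have "huber_deriv z * h \<le> \<bar>huber_deriv z\<bar> * \<bar>h\<bar>"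
    by (simp add: abs_mult [symmetric])
  also have "\<dots> \<le> \<bar>huber_deriv z\<bar>"
    using assms by (simp add: mult_left_le)
  also have "\<dots> = huber_deriv z * sign_pm z"
    by (simp add: huber_deriv_def sign_pm_def)
  finally show ?thesis .
qed

lemma (in finite_measure) integral_huber_deriv_mult_le_sign:
  assumes H: "H \<in> borel_measurable M" and h: "h \<in> borel_measurable M"
    and h_bound: "\<And>x. x \<in> space M \<Longrightarrow> \<bar>h x\<bar> \<le> 1"
  shows "(\<integral>x. huber_deriv (H x) * h x \<partial>M) \<le> (\<integral>x. huber_deriv (H x) * sign_pm (H x) \<partial>M)"
proof (rule integral_mono)
  have huber_meas: "(\<lambda>x. huber_deriv (H x)) \<in> borel_measurable M"
    unfolding huber_deriv_def sign_pm_def using H by measurable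
  have sign_meas: "(\<lambda>x. sign_pm (H x)) \<in> borel_measurable M"
    unfolding sign_pm_def using H by measurable
  show "integrable M (\<lambda>x. huber_deriv (H x) * h x)"
  proof (rule integrable_const_bound[where B=1])
    show "AE x in M. norm (huber_deriv (H x) * h x) \<le> 1"
      using h_bound abs_huber_deriv_le_1 by (intro AE_I2) (simp add: abs_mult mult_le_one)
  qed (use huber_meas h in measurable)
  show "integrable M (\<lambda>x. huber_deriv (H x) * sign_pm (H x))"
    using huber_meas sign_meas abs_huber_deriv_le_1
    by (intro integrable_const_bound[where B=1]) (auto simp: abs_mult sign_pm_def)
  show "huber_deriv (H x) * h x \<le> huber_deriv (H x) * sign_pm (H x)" if "x \<in> space M" for x
    using h_bound[OF that] by (rule huber_deriv_mult_le_sign)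
qed

lemma (in sigma_finite_measure) esssup_RN_deriv_le_imp_pos:
  assumes ac: "absolutely_continuous M N" and sets_N: "sets N = sets M"
    and nontrivial: "emeasure N (space N) \<noteq> 0"
    and bound: "esssup M (RN_deriv M N) \<le> ennreal C"
  shows "C > 0"
proof (rule ccontr)
  assume "\<not> C > 0"
  then have "ennreal C = 0"
    by (simp add: ennreal_eq_0_iff)
  then have "AE x in M. RN_deriv M N x = 0"
    using esssup_AE[of "RN_deriv M N" M] bound
    by (auto elim!: eventually_mono)
  then have "(\<integral>\<^sup>+x. RN_deriv M N x \<partial>M) = 0"
    by (simp add: nn_integral_0_iff_AE)
  then have "emeasure (density M (RN_deriv M N)) (space M) = 0"
    by (simp add: emeasure_density nn_integral_set_ennreal)
  with nontrivial show False
    using density_RN_deriv[OF ac sets_N] sets_eq_imp_space_eq[OF sets_N] by simp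
qed

theorem mainTheorem5:
  fixes Q :: "'a measure" and D :: "('a \<times> real) measure" and C :: real
    and H hstar :: "'a \<Rightarrow> real"
  assumes Q_prob: "prob_space Q"
    and D_prob: "prob_space D"
    and D_sets: "sets D = sets (Q \<Otimes>\<^sub>M count_space {-1, 1})"
    and ac: "absolutely_continuous Q (distr D Q fst)"
    and C_bound: "esssup Q (RN_deriv Q (distr D Q fst)) \<le> ennreal C"
    and H_meas: "H \<in> borel_measurable Q"
    and hstar_meas: "hstar \<in> borel_measurable Q"
    and hstar_pm: "\<forall>x\<in>space Q. hstar x \<in> {-1, 1}"
  shows "Phi' C Q D H (\<lambda>x. sign_pm (H x)) - Phi' C Q D H hstar
           \<ge> corr D hstar - corr D (\<lambda>x. sign_pm (H x))"
proof -
  interpret Q: prob_space Q by (rule Q_prob)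
  interpret D: prob_space D by (rule D_prob)
  have "fst \<in> measurable D Q"
    using measurable_cong_sets[OF D_sets refl] measurable_fst by blast
  then have "prob_space (distr D Q fst)"
    by (rule D.prob_space_distr)
  then have "emeasure (distr D Q fst) (space (distr D Q fst)) = 1"
    by (rule prob_space.emeasure_space_1)
  then have "C > 0"
    using Q.esssup_RN_deriv_le_imp_pos[OF ac _ _ C_bound] by simp
  moreover have "(\<integral>x. huber_deriv (H x) * hstar x \<partial>Q)
      \<le> (\<integral>x. huber_deriv (H x) * sign_pm (H x) \<partial>Q)"
    using hstar_pm by (intro Q.integral_huber_deriv_mult_le_sign H_meas hstar_meas) auto
  ultimately show ?thesis
    unfolding Phi'_def corr_def by simp
qed

end
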